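(* Let $\mathfrak{M}=(S,\mathcal{L})$ be a partial Steiner triple system and let $H_1,H_2$ be distinct hyperplanes of $\mathfrak{M}$. Then the set $$H_1\pitchfork H_2:=(H_1\cap H_2)\cup\big((S\setminus H_1)\cap(S\setminus H_2)\big)=S\setminus(H_1\,\triangle\, H_2)$$ is also a hyperplane of $\mathfrak{M}$.
   Context: A partial Steiner triple system (PSTS) is a partial linear space $(S,\mathcal{L})$ (any two distinct points lie on at most one line) in which every line has exactly $3$ points and every point lies on the same number of lines. A subspace of $\mathfrak{M}$ is a set $U\subseteq S$ such that every line having at least two points in $U$ is contained in $U$. A hyperplane of $\mathfrak{M}$ is a proper subspace $H\subsetneq S$ which meets every line of $\mathfrak{M}$. $\triangle$ denotes symmetric difference. *)

theory Defs
  imports Main "HOL-Library.Equipollence"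
begin

definition partial_linear_space :: "'a set \<Rightarrow> 'a set set \<Rightarrow> bool" where
  "partial_linear_space S L \<longleftrightarrow>
     (\<forall>l\<in>L. l \<subseteq> S) \<and>
     (\<forall>p\<in>S. \<forall>q\<in>S. p \<noteq> q \<longrightarrow> (\<forall>l1\<in>L. \<forall>l2\<in>L. p \<in> l1 \<and> q \<in> l1 \<and> p \<in> l2 \<and> q \<in> l2 \<longrightarrow> l1 = l2))"

definition psts :: "'a set \<Rightarrow> 'a set set \<Rightarrow> bool" where
  "psts S L \<longleftrightarrow> partial_linear_space S L \<and>
     (\<forall>l\<in>L. finite l \<and> card l = 3) \<and>
     (\<forall>p\<in>S. \<forall>q\<in>S. {l\<in>L. p \<in> l} \<approx> {l\<in>L. q \<in> l})"

definition subspace :: "'a set \<Rightarrow> 'a set set \<Rightarrow> 'a set \<Rightarrow> bool" where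
  "subspace S L U \<longleftrightarrow> U \<subseteq> S \<and>
     (\<forall>l\<in>L. (\<exists>p q. p \<noteq> q \<and> p \<in> l \<inter> U \<and> q \<in> l \<inter> U) \<longrightarrow> l \<subseteq> U)"

definition hyperplane :: "'a set \<Rightarrow> 'a set set \<Rightarrow> 'a set \<Rightarrow> bool" where
  "hyperplane S L H \<longleftrightarrow> subspace S L H \<and> H \<subset> S \<and> (\<forall>l\<in>L. l \<inter> H \<noteq> {})"

end

theory Submission
  imports Defs
begin

text \<open>On a line with three points, a hyperplane meets the line in one or three points, so its
  complement meets every line in an even number of points; conversely this parity condition
  characterises hyperplanes among proper subsets. The complement of
  \<open>(H\<^sub>1 \<inter> H\<^sub>2) \<union> ((S - H\<^sub>1) \<inter> (S - H\<^sub>2))\<close> is the symmetric difference of the complements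
  of \<open>H\<^sub>1\<close> and \<open>H\<^sub>2\<close>, and a symmetric difference of two even sets is even.\<close>

lemma even_card_sym_diff:
  assumes "finite A" "finite B" "even (card A)" "even (card B)"
  shows "even (card ((A - B) \<union> (B - A)))"
proof -
  have "card ((A - B) \<union> (B - A)) = card (A - B) + card (B - A)"
    using assms(1,2) by (intro card_Un_disjoint) auto
  moreover have "card A = card (A \<inter> B) + card (A - B)" "card B = card (A \<inter> B) + card (B - A)"
    using card_Int_Diff assms(1,2) by (metis, metis Int_commute)
  ultimately show ?thesis
    using assms(3,4) by presburger
qed

lemma three_point_line_closed_and_met_iff_even_card_diff:
  assumes "finite l" "card l = 3"
  shows "(((\<exists>p q. p \<noteq> q \<and> p \<in> l \<inter> H \<and> q \<in> l \<inter> H) \<longrightarrow> l \<subseteq> H) \<and> l \<inter> H \<noteq> {})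
    \<longleftrightarrow> even (card (l - H))"
proof -
  obtain a b c where l: "l = {a, b, c}" "a \<noteq> b" "a \<noteq> c" "b \<noteq> c"
    using assms card_3_iff by metis
  show ?thesis
    unfolding l(1) using l(2-4)
    by (cases "a \<in> H"; cases "b \<in> H"; cases "c \<in> H") (auto simp: insert_Diff_if)
qed

lemma hyperplane_iff_even_card_line_diff:
  assumes "\<forall>l\<in>L. l \<subseteq> S \<and> finite l \<and> card l = 3"
  shows "hyperplane S L H \<longleftrightarrow> H \<subset> S \<and> (\<forall>l\<in>L. even (card (l - H)))"
proof -
  have "hyperplane S L H \<longleftrightarrow> H \<subset> S \<and> (\<forall>l\<in>L.
      ((\<exists>p q. p \<noteq> q \<and> p \<in> l \<inter> H \<and> q \<in> l \<inter> H) \<longrightarrow> l \<subseteq> H) \<and> l \<inter> H \<noteq> {})"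
    unfolding hyperplane_def subspace_def by blast
  also have "\<dots> \<longleftrightarrow> H \<subset> S \<and> (\<forall>l\<in>L. even (card (l - H)))"
    using assms
    by (intro conj_cong refl ball_cong three_point_line_closed_and_met_iff_even_card_diff) auto
  finally show ?thesis .
qed

theorem proposition1p5:
  fixes S :: "'a set" and L :: "'a set set" and H1 H2 :: "'a set"
  assumes "psts S L"
    and "hyperplane S L H1" and "hyperplane S L H2" and "H1 \<noteq> H2"
  shows "hyperplane S L ((H1 \<inter> H2) \<union> ((S - H1) \<inter> (S - H2)))"
proof -
  have lines: "\<forall>l\<in>L. l \<subseteq> S \<and> finite l \<and> card l = 3"
    using assms(1) unfolding psts_def partial_linear_space_def by blast
  note hyperplane_iff = hyperplane_iff_even_card_line_diff[OF lines]
  have H: "H1 \<subset> S" "H2 \<subset> S" "\<forall>l\<in>L. even (card (l - H1))" "\<forall>l\<in>L. even (card (l - H2))"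
    using assms(2,3) unfolding hyperplane_iff by blast+
  let ?K = "(H1 \<inter> H2) \<union> ((S - H1) \<inter> (S - H2))"
  have "?K \<subset> S"
  proof
    show "?K \<subseteq> S"
      using H(1,2) by blast
    show "?K \<noteq> S"
    proof
      assume "?K = S"
      with H(1,2) have "H1 = H2"
        by blast
      with assms(4) show False
        by contradiction
    qed
  qed
  moreover have "even (card (l - ?K))" if "l \<in> L" for l
  proof -
    have "l \<subseteq> S"
      using lines that by blast
    then have "l - ?K = ((l - H1) - (l - H2)) \<union> ((l - H2) - (l - H1))"
      by blast
    then show ?thesis
      using even_card_sym_diff[of "l - H1" "l - H2"] H(3,4) lines that by simp
  qed
  ultimately show ?thesis
    unfolding hyperplane_iff by blast
qed

end
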